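(* Let $q$ be a power of an odd prime $p$, $e\ge 2$, $r$ a positive integer, $a\in\mathbb{F}_{q^e}$ with $a\neq 0$, $f(x)=x^r(x^{q-1}+a)$, and $\ell=q^{e-1}+\cdots+q+1$. If $r\bmod\ell=hq+1$ for an integer $h$ with $p\nmid h$, then $f(x)$ does not permute $\mathbb{F}_{q^e}$.
   Context: $r\bmod\ell$ denotes the least nonnegative residue of $r$ modulo $\ell$. *)

theory Defs
  imports "HOL-Computational_Algebra.Primes"
begin

end

theory Submission
  imports Defs "HOL-Computational_Algebra.Polynomial" "HOL-Number_Theory.Residues" "HOL-Library.Cardinality"
begin

(* Hermite's criterion: if f permutes a field with Q = q^e elements, then the sum of f(x)^t over
   the field vanishes for 0 < t < Q - 1.  Take t = 2 (N - 1) with N = q^(e-1).  As N is a power of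
   the characteristic, (u + a)^(N - 1) = sum_{i<N} u^i (-a)^(N-1-i), so f(x)^t is a combination
   of the monomials x^((q-1)(2 L r + i + j)), i, j < N, where (q - 1) L = N - 1.  Summing over the
   field keeps exactly the monomials whose exponent is divisible by Q - 1 = (q - 1) l, where
   l = L + N; since r = h q + 1 (mod l), these are the pairs with i + j = sigma := N + 2 h - L.
   There are sigma + 1 or 2 N - 1 - sigma of them, i.e. +-2h modulo p, so the sum is nonzero. *)

lemma finite_field_power_card_minus_1:
  fixes x :: "'a :: {field, finite}"
  assumes "x \<noteq> 0"
  shows "x ^ (CARD('a) - 1) = 1"
proof -
  have "x ^ (CARD('a) - 1) * \<Prod>(UNIV - {0}) = (\<Prod>y\<in>UNIV - {0}. x * y)"
    by (simp add: prod.distrib card_Diff_singleton)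
  also have "\<dots> = \<Prod>(UNIV - {0 :: 'a})"
    by (rule prod.reindex_bij_witness[of _ "\<lambda>y. y / x" "\<lambda>y. x * y"]) (use assms in auto)
  finally show ?thesis
    by simp
qed

lemma finite_field_power_mod:
  fixes x :: "'a :: {field, finite}"
  assumes "x \<noteq> 0"
  shows "x ^ m = x ^ (m mod (CARD('a) - 1))"
proof -
  have "x ^ m = x ^ ((CARD('a) - 1) * (m div (CARD('a) - 1)) + m mod (CARD('a) - 1))"
    by (simp only: mult_div_mod_eq)
  also have "\<dots> = (x ^ (CARD('a) - 1)) ^ (m div (CARD('a) - 1)) * x ^ (m mod (CARD('a) - 1))"
    by (simp only: power_add power_mult)
  finally show ?thesis
    unfolding finite_field_power_card_minus_1[OF assms] by simp
qed

lemma finite_field_exists_power_neq_1: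
  assumes "0 < m" "m < CARD('a :: {field, finite}) - 1"
  shows "\<exists>c::'a. c \<noteq> 0 \<and> c ^ m \<noteq> 1"
proof (rule ccontr)
  assume contra: "\<not> ?thesis"
  define P :: "'a poly" where "P = Polynomial.monom 1 m + [:-1:]"
  have "degree P = m"
    using assms(1) unfolding P_def by (subst degree_add_eq_left) (auto simp: degree_monom_eq)
  then have "P \<noteq> 0"
    using assms(1) by auto
  have "UNIV - {0} \<subseteq> {x::'a. poly P x = 0}"
    using contra by (auto simp: P_def poly_monom)
  then have "card (UNIV - {0::'a}) \<le> card {x::'a. poly P x = 0}"
    by (intro card_mono poly_roots_finite \<open>P \<noteq> 0\<close>)
  also have "\<dots> \<le> m"
    using card_poly_roots_bound[OF \<open>P \<noteq> 0\<close>] \<open>degree P = m\<close> by simp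
  finally show False
    using assms by (simp add: card_Diff_singleton)
qed

lemma sum_finite_field_power:
  assumes "m > 0"
  shows "(\<Sum>x\<in>UNIV. (x :: 'a :: {field, finite}) ^ m) = (if (CARD('a) - 1) dvd m then -1 else 0)"
proof (cases "(CARD('a) - 1) dvd m")
  case True
  have "(\<Sum>x\<in>UNIV. x ^ m) = (\<Sum>x\<in>UNIV-{0::'a}. x ^ m)"
    using assms by (intro sum.mono_neutral_right) auto
  also have "\<dots> = (\<Sum>x\<in>UNIV-{0::'a}. 1)"
    using True by (intro sum.cong) (auto simp: finite_field_power_mod[of _ m])
  also have "\<dots> = of_nat CARD('a) - 1"
    by (simp add: card_Diff_singleton of_nat_diff Suc_leI finite_UNIV_card_ge_0)
  also have "of_nat CARD('a) = (0 :: 'a)"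
    using CHAR_dvd_CARD of_nat_eq_0_iff_char_dvd by blast
  finally show ?thesis
    using True by simp
next
  case False
  have "CARD('a) - 1 > 0"
    using card_mono[of UNIV "{0 :: 'a, 1}"] by simp
  moreover have "m mod (CARD('a) - 1) \<noteq> 0"
    using False mod_0_imp_dvd by blast
  ultimately have "0 < m mod (CARD('a) - 1)" "m mod (CARD('a) - 1) < CARD('a) - 1"
    by simp_all
  then obtain c :: 'a where c: "c \<noteq> 0" "c ^ m \<noteq> 1"
    using finite_field_exists_power_neq_1 finite_field_power_mod by metis
  have "(\<Sum>x\<in>UNIV. x ^ m) = (\<Sum>x\<in>UNIV. (c * x :: 'a) ^ m)"
    by (rule sum.reindex_bij_witness[of _ "\<lambda>y. c * y" "\<lambda>y. y / c"]) (use c in auto)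
  also have "\<dots> = c ^ m * (\<Sum>x\<in>UNIV. x ^ m)"
    by (simp add: power_mult_distrib sum_distrib_left)
  finally have "(1 - c ^ m) * (\<Sum>x\<in>UNIV. x ^ m) = 0"
    by (simp add: algebra_simps)
  then show ?thesis
    using c False by simp
qed

lemma sum_finite_field_polynomial:
  fixes w :: "'b \<Rightarrow> 'a :: {field, finite}"
  assumes "finite K" "\<And>k. k \<in> K \<Longrightarrow> m k > 0"
  shows "(\<Sum>x\<in>UNIV. \<Sum>k\<in>K. w k * x ^ m k) = - (\<Sum>k\<in>{k\<in>K. (CARD('a) - 1) dvd m k}. w k)"
proof -
  have "(\<Sum>x\<in>UNIV. \<Sum>k\<in>K. w k * x ^ m k) = (\<Sum>k\<in>K. w k * (\<Sum>x\<in>UNIV. x ^ m k))"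
    by (simp add: sum.swap[of _ UNIV] sum_distrib_left)
  also have "\<dots> = (\<Sum>k\<in>K. - (if (CARD('a) - 1) dvd m k then w k else 0))"
    using assms(2) by (intro sum.cong) (auto simp: sum_finite_field_power)
  finally show ?thesis
    by (simp only: sum_negf sum.inter_filter[OF assms(1)])
qed

lemma bij_imp_sum_power_eq_0:
  fixes f :: "'a :: {field, finite} \<Rightarrow> 'a"
  assumes "bij f" "0 < t" "t < CARD('a) - 1"
  shows "(\<Sum>x\<in>UNIV. f x ^ t) = 0"
proof -
  have "(\<Sum>x\<in>UNIV. f x ^ t) = (\<Sum>x\<in>UNIV. x ^ t)"
    using sum.reindex_bij_betw[OF assms(1), of "\<lambda>y. y ^ t"] by simp
  also have "\<dots> = 0"
    using assms(2,3) by (auto simp: sum_finite_field_power dest: dvd_imp_le)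
  finally show ?thesis .
qed

lemma prime_CHAR_finite_field: "prime CHAR('a :: {field, finite})"
  by (intro prime_CHAR_semidom finite_imp_CHAR_pos) simp

lemma CHAR_finite_field:
  assumes "prime p" "CARD('a :: {field, finite}) = p ^ n"
  shows "CHAR('a) = p"
proof -
  note prime_CHAR_finite_field
  moreover have "CHAR('a) dvd p ^ n"
    using CHAR_dvd_CARD assms(2) by metis
  ultimately show ?thesis
    using assms(1) by (metis prime_dvd_power primes_dvd_imp_eq)
qed

lemma power_diff_char_power:
  fixes x y :: "'a :: comm_ring_1"
  assumes "prime CHAR('a)" "N = CHAR('a) ^ m"
  shows "(x - y) ^ N = x ^ N - y ^ N"
  using freshmans_dream'[OF assms, of "x - y" y] by (simp add: eq_diff_eq)

lemma power_diff_char_power_minus_1: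
  fixes x y :: "'a :: idom"
  assumes "prime CHAR('a)" "N = CHAR('a) ^ m" "m > 0"
  shows "(x - y) ^ (N - 1) = (\<Sum>i<N. x ^ i * y ^ (N - 1 - i))"
proof -
  have "N > 1"
    using assms prime_gt_1_nat one_less_power by blast
  show ?thesis
  proof (cases "x = y")
    case True
    have "of_nat N = (0 :: 'a)"
      using assms(2,3) by (simp add: of_nat_eq_0_iff_char_dvd)
    moreover have "(\<Sum>i<N. y ^ i * y ^ (N - 1 - i)) = of_nat N * y ^ (N - 1)"
      by (simp flip: power_add)
    ultimately show ?thesis
      using True \<open>N > 1\<close> by simp
  next
    case False
    have N: "N = Suc (N - 1)"
      using \<open>N > 1\<close> by simp
    have "(x - y) * (x - y) ^ (N - 1) = x ^ N - y ^ N"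
      using power_diff_char_power[OF assms(1,2), of x y] N by (metis power_Suc)
    also have "\<dots> = (x - y) * (\<Sum>i<N. x ^ i * y ^ (N - 1 - i))"
      using diff_power_eq_sum[of x "N - 1" y] N by simp
    finally show ?thesis
      using False by simp
  qed
qed

lemma power_binomial_expansion:
  fixes x c :: "'a :: idom"
  assumes "prime CHAR('a)" "N = CHAR('a) ^ m" "m > 0" "N - 1 = d * L"
  shows "(x ^ r * (x ^ d - c)) ^ (2 * (N - 1)) =
    (\<Sum>(i, j)\<in>{..<N} \<times> {..<N}. c ^ (N - 1 - i) * c ^ (N - 1 - j) * x ^ (d * (2 * L * r + i + j)))"
proof -
  have "(x ^ r) ^ (2 * (N - 1)) = (x ^ d) ^ (2 * L * r)"
    unfolding assms(4) by (simp add: mult_ac flip: power_mult)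
  then have "(x ^ r * (x ^ d - c)) ^ (2 * (N - 1)) =
      (x ^ d) ^ (2 * L * r) * ((x ^ d - c) ^ (N - 1) * (x ^ d - c) ^ (N - 1))"
    by (simp add: power_mult_distrib mult_2 power_add)
  also have "\<dots> = (\<Sum>i<N. \<Sum>j<N. (x ^ d) ^ (2 * L * r) *
      ((x ^ d) ^ i * c ^ (N - 1 - i) * ((x ^ d) ^ j * c ^ (N - 1 - j))))"
    unfolding power_diff_char_power_minus_1[OF assms(1-3)] sum_product by (simp only: sum_distrib_left)
  also have "\<dots> = (\<Sum>(i, j)\<in>{..<N} \<times> {..<N}.
      c ^ (N - 1 - i) * c ^ (N - 1 - j) * x ^ (d * (2 * L * r + i + j)))"
    by (simp add: sum.cartesian_product power_add power_mult mult_ac)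
  finally show ?thesis .
qed

lemma sum_power_binomial_eq:
  fixes a :: "'a :: {field, finite}"
  assumes "N = CHAR('a) ^ m" "m > 0" "N - 1 = d * L" "d > 0" "L > 0" "r > 0"
  shows "(\<Sum>x\<in>UNIV. (x ^ r * (x ^ d + a)) ^ (2 * (N - 1))) =
    - (\<Sum>(i, j)\<in>{(i, j) \<in> {..<N} \<times> {..<N}. (CARD('a) - 1) dvd d * (2 * L * r + i + j)}.
        (- a) ^ (N - 1 - i) * (- a) ^ (N - 1 - j))"
proof -
  define w where "w = (\<lambda>(i, j). (- a) ^ (N - 1 - i) * (- a) ^ (N - 1 - j))"
  define k where "k = (\<lambda>(i, j). d * (2 * L * r + i + j))"
  have "(x ^ r * (x ^ d + a)) ^ (2 * (N - 1)) = (\<Sum>ij\<in>{..<N} \<times> {..<N}. w ij * x ^ k ij)" for x :: 'a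
    using power_binomial_expansion[OF prime_CHAR_finite_field assms(1-3), of x r "- a"]
    unfolding w_def k_def split_def by simp
  then have "(\<Sum>x\<in>UNIV. (x ^ r * (x ^ d + a)) ^ (2 * (N - 1))) =
      (\<Sum>x\<in>UNIV. \<Sum>ij\<in>{..<N} \<times> {..<N}. w ij * x ^ k ij)"
    by simp
  also have "\<dots> = - (\<Sum>ij\<in>{ij \<in> {..<N} \<times> {..<N}. (CARD('a) - 1) dvd k ij}. w ij)"
    using assms(4-6) by (intro sum_finite_field_polynomial) (auto simp: k_def)
  finally show ?thesis
    unfolding w_def k_def split_def prod.collapse .
qed

lemma sum_powers_lessThan_Suc_shift:
  "(\<Sum>i<Suc n. q ^ i) = q * (\<Sum>i<n. q ^ i) + (1 :: 'a :: comm_semiring_1)"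
  by (simp add: sum.lessThan_Suc_shift sum_distrib_left add.commute del: sum.lessThan_Suc)

lemma pred_mult_sum_powers:
  fixes q :: nat
  assumes "q > 0"
  shows "(q - 1) * (\<Sum>i<n. q ^ i) = q ^ n - 1"
proof -
  have "int ((q - 1) * (\<Sum>i<n. q ^ i)) = int (q ^ n - 1)"
    using power_diff_1_eq[of "int q" n] assms by (simp add: of_nat_diff)
  then show ?thesis
    by (simp only: of_nat_eq_iff)
qed

lemma less_of_mod_mult_add_1_eq:
  fixes q L r h :: nat
  assumes "r mod (q * L + 1) = h * q + 1"
  shows "h < L"
proof -
  have "h * q + 1 < q * L + 1"
    unfolding assms[symmetric] by simp
  then show ?thesis
    by (simp add: mult.commute[of q L])
qed

lemma dvd_iff_of_mod_eq:
  fixes q L N l r h k :: nat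
  assumes "l = q * L + 1" "l = L + N" "r mod l = h * q + 1" "k < 2 * N"
  shows "l dvd 2 * L * r + k \<longleftrightarrow> k + L = N + 2 * h"
proof -
  have "h < L"
    using less_of_mod_mult_add_1_eq assms(1,3) by blast
  define w where "w = 2 * int L + int k - 2 * int h"
  have r: "r = l * (r div l) + (h * q + 1)"
    using assms(3) by (metis div_mult_mod_eq mult.commute)
  \<comment> \<open>As \<open>q L = l - 1\<close>, \<open>2 L r \<equiv> 2 L (h q + 1) \<equiv> 2 L - 2 h\<close> modulo \<open>l\<close>.\<close>
  have "int (2 * L * r + k) = int l * (2 * L * int (r div l) + 2 * h) + w"
    unfolding w_def using arg_cong[OF r, of int] assms(1) by (simp add: algebra_simps)
  then have "l dvd 2 * L * r + k \<longleftrightarrow> int l dvd w"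
    by (metis dvd_add_right_iff dvd_triv_left int_dvd_int_iff)
  also have "\<dots> \<longleftrightarrow> w = int l"
  proof
    assume "int l dvd w"
    then obtain c where c: "w = int l * c" ..
    have "0 < w" "w < 2 * int l"
      unfolding w_def using \<open>h < L\<close> assms(2,4) by linarith+
    then have "0 < c" "c < 2"
      unfolding c by (simp_all add: zero_less_mult_iff)
    then show "w = int l"
      using c by simp
  qed simp
  also have "\<dots> \<longleftrightarrow> k + L = N + 2 * h"
    unfolding w_def using assms(2) by linarith
  finally show ?thesis .
qed

lemma pred_power_dvd_iff_pair_sum:
  fixes q n r h :: nat
  assumes "q > 1" "r mod (\<Sum>i<Suc n. q ^ i) = h * q + 1"
  obtains \<sigma> where "\<sigma> + (\<Sum>i<n. q ^ i) = q ^ n + 2 * h" "\<sigma> < 2 * q ^ n"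
    "\<And>i j. i < q ^ n \<Longrightarrow> j < q ^ n \<Longrightarrow>
       (q ^ Suc n - 1) dvd (q - 1) * (2 * (\<Sum>i<n. q ^ i) * r + i + j) \<longleftrightarrow> i + j = \<sigma>"
proof -
  define N L l where "N = q ^ n" and "L = (\<Sum>i<n. q ^ i)" and "l = (\<Sum>i<Suc n. q ^ i)"
  have l_shift: "l = q * L + 1"
    unfolding l_def L_def by (rule sum_powers_lessThan_Suc_shift)
  have l_split: "l = L + N"
    unfolding l_def L_def N_def by simp
  have r_mod: "r mod l = h * q + 1"
    unfolding l_def by (fact assms(2))
  have "h < L"
    using less_of_mod_mult_add_1_eq r_mod l_shift by blast
  have "1 \<le> q - 1"
    using \<open>q > 1\<close> by linarith
  then have "L \<le> (q - 1) * L"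
    using mult_le_mono1[of 1 "q - 1" L] by simp
  also have "\<dots> = N - 1"
    unfolding N_def L_def using pred_mult_sum_powers[of q n] \<open>q > 1\<close> by simp
  finally have "L < N"
    using \<open>h < L\<close> by linarith
  define \<sigma> where "\<sigma> = N + 2 * h - L"
  have \<sigma>: "\<sigma> + L = N + 2 * h" "\<sigma> < 2 * N"
    unfolding \<sigma>_def using \<open>h < L\<close> \<open>L < N\<close> by linarith+
  have "q ^ Suc n - 1 = (q - 1) * l"
    unfolding l_def by (rule pred_mult_sum_powers[symmetric]) (use \<open>q > 1\<close> in simp)
  have "(q ^ Suc n - 1) dvd (q - 1) * (2 * L * r + i + j) \<longleftrightarrow> i + j = \<sigma>"
    if "i < N" "j < N" for i j
  proof -
    have "(q ^ Suc n - 1) dvd (q - 1) * (2 * L * r + i + j) \<longleftrightarrow> l dvd 2 * L * r + (i + j)"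
      unfolding \<open>q ^ Suc n - 1 = (q - 1) * l\<close> using \<open>q > 1\<close> by (simp add: add.assoc)
    also have "\<dots> \<longleftrightarrow> i + j + L = N + 2 * h"
      using that by (intro dvd_iff_of_mod_eq[OF l_shift l_split r_mod]) simp
    also have "\<dots> \<longleftrightarrow> i + j = \<sigma>"
      using \<sigma>(1) by arith
    finally show ?thesis .
  qed
  with \<sigma> that show ?thesis
    unfolding N_def L_def by blast
qed

lemma card_pairs_with_sum:
  fixes N s :: nat
  assumes "s < 2 * N"
  shows "card {(i, j) \<in> {..<N} \<times> {..<N}. i + j = s} = (if s < N then Suc s else 2 * N - Suc s)"
proof -
  have "{(i, j) \<in> {..<N} \<times> {..<N}. i + j = s} = (\<lambda>i. (i, s - i)) ` {Suc s - N..<min N (Suc s)}"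
    by (auto simp: image_iff)
  moreover have "inj_on (\<lambda>i. (i, s - i)) A" for A
    by (auto simp: inj_on_def)
  ultimately show ?thesis
    using assms by (simp add: card_image mult_2)
qed

lemma of_nat_card_pairs_with_sum_neq_0:
  assumes "of_nat N = (0 :: 'a :: comm_ring_1)" "s < 2 * N" "of_nat (Suc s) \<noteq> (0 :: 'a)"
  shows "of_nat (card {(i, j) \<in> {..<N} \<times> {..<N}. i + j = s}) \<noteq> (0 :: 'a)"
proof (cases "s < N")
  case False
  then have "2 * N - Suc s + Suc s = 2 * N"
    using assms(2) by simp
  then have "of_nat (2 * N - Suc s) + of_nat (Suc s) = (of_nat (2 * N) :: 'a)"
    by (metis of_nat_add)
  with assms(1) have "of_nat (2 * N - Suc s) = - (of_nat (Suc s) :: 'a)"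
    by (simp add: add_eq_0_iff2)
  with False have "of_nat (card {(i, j) \<in> {..<N} \<times> {..<N}. i + j = s}) = - (of_nat (Suc s) :: 'a)"
    using card_pairs_with_sum[OF assms(2)] by simp
  then show ?thesis
    using assms(3) by (metis neg_equal_0_iff_equal)
qed (use card_pairs_with_sum[OF assms(2)] assms(3) in simp)

lemma sum_pairs_with_sum_power:
  fixes c :: "'a :: comm_semiring_1"
  shows "(\<Sum>(i, j)\<in>{(i, j) \<in> {..<N} \<times> {..<N}. i + j = s}. c ^ (N - 1 - i) * c ^ (N - 1 - j)) =
    of_nat (card {(i, j) \<in> {..<N} \<times> {..<N}. i + j = s}) * c ^ (2 * N - 2 - s)"
proof -
  have "(\<Sum>(i, j)\<in>{(i, j) \<in> {..<N} \<times> {..<N}. i + j = s}. c ^ (N - 1 - i) * c ^ (N - 1 - j)) =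
    (\<Sum>_\<in>{(i, j) \<in> {..<N} \<times> {..<N}. i + j = s}. c ^ (2 * N - 2 - s))"
  proof (intro sum.cong refl)
    fix ij assume "ij \<in> {(i, j) \<in> {..<N} \<times> {..<N}. i + j = s}"
    then obtain i j where "ij = (i, j)" "i < N" "j < N" "i + j = s"
      by blast
    moreover from this have "(N - 1 - i) + (N - 1 - j) = 2 * N - 2 - s"
      by linarith
    then have "c ^ (N - 1 - i) * c ^ (N - 1 - j) = c ^ (2 * N - 2 - s)"
      by (metis power_add)
    ultimately show "(case ij of (i, j) \<Rightarrow> c ^ (N - 1 - i) * c ^ (N - 1 - j)) = c ^ (2 * N - 2 - s)"
      by simp
  qed
  then show ?thesis
    by simp
qed

lemma sum_power_binomial_eq_card:
  fixes a :: "'a :: {field, finite}" and q k n r \<sigma> :: nat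
  assumes "q = CHAR('a) ^ k" "k > 0" "n > 0" "CARD('a) = q ^ Suc n" "r > 0"
    and "\<And>i j. i < q ^ n \<Longrightarrow> j < q ^ n \<Longrightarrow>
      (q ^ Suc n - 1) dvd (q - 1) * (2 * (\<Sum>i<n. q ^ i) * r + i + j) \<longleftrightarrow> i + j = \<sigma>"
  shows "(\<Sum>x\<in>UNIV. (x ^ r * (x ^ (q - 1) + a)) ^ (2 * (q ^ n - 1))) =
    - (of_nat (card {(i, j) \<in> {..<q ^ n} \<times> {..<q ^ n}. i + j = \<sigma>}) * (- a) ^ (2 * q ^ n - 2 - \<sigma>))"
proof -
  have "q > 1"
    using assms(1,2) prime_CHAR_finite_field prime_gt_1_nat one_less_power by blast
  define N L where "N = q ^ n" and "L = (\<Sum>i<n. q ^ i)"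
  have "L > 0"
    unfolding L_def using assms(3) \<open>q > 1\<close> by (cases n) auto
  have "N = CHAR('a) ^ (k * n)"
    unfolding N_def assms(1) by (simp add: power_mult)
  moreover have "N - 1 = (q - 1) * L"
    unfolding N_def L_def using pred_mult_sum_powers[of q n] \<open>q > 1\<close> by simp
  ultimately have "(\<Sum>x\<in>UNIV. (x ^ r * (x ^ (q - 1) + a)) ^ (2 * (N - 1))) =
      - (\<Sum>(i, j)\<in>{(i, j) \<in> {..<N} \<times> {..<N}. (CARD('a) - 1) dvd (q - 1) * (2 * L * r + i + j)}.
          (- a) ^ (N - 1 - i) * (- a) ^ (N - 1 - j))"
    using \<open>q > 1\<close> \<open>L > 0\<close> assms(2,3,5) by (intro sum_power_binomial_eq[where m = "k * n"]) auto
  also have "{(i, j) \<in> {..<N} \<times> {..<N}. (CARD('a) - 1) dvd (q - 1) * (2 * L * r + i + j)} =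
      {(i, j) \<in> {..<N} \<times> {..<N}. i + j = \<sigma>}"
    using assms(4,6) unfolding N_def L_def by auto
  finally show ?thesis
    unfolding N_def by (simp only: sum_pairs_with_sum_power)
qed

lemma sum_power_binomial_neq_0:
  fixes a :: "'a :: {field, finite}" and q k n r h :: nat
  assumes "q = CHAR('a) ^ k" "k > 0" "n > 0" "CARD('a) = q ^ Suc n" "a \<noteq> 0"
    and "r mod (\<Sum>i<Suc n. q ^ i) = h * q + 1" "\<not> CHAR('a) dvd 2 * h"
  shows "(\<Sum>x\<in>UNIV. (x ^ r * (x ^ (q - 1) + a)) ^ (2 * (q ^ n - 1))) \<noteq> 0"
proof -
  have "q > 1"
    using assms(1,2) prime_CHAR_finite_field prime_gt_1_nat one_less_power by blast
  obtain \<sigma> where \<sigma>: "\<sigma> + (\<Sum>i<n. q ^ i) = q ^ n + 2 * h" "\<sigma> < 2 * q ^ n"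
    "\<And>i j. i < q ^ n \<Longrightarrow> j < q ^ n \<Longrightarrow>
       (q ^ Suc n - 1) dvd (q - 1) * (2 * (\<Sum>i<n. q ^ i) * r + i + j) \<longleftrightarrow> i + j = \<sigma>"
    using pred_power_dvd_iff_pair_sum[OF \<open>q > 1\<close> assms(6)] by blast
  have "r > 0"
    using assms(6) by (cases r) auto
  have q0: "of_nat q = (0 :: 'a)"
    using assms(1,2) by (simp add: of_nat_eq_0_iff_char_dvd)
  obtain n' where "n = Suc n'"
    using assms(3) by (cases n) auto
  then have "of_nat (\<Sum>i<n. q ^ i) = (1 :: 'a)"
    using q0 by (simp only: sum_powers_lessThan_Suc_shift) simp
  moreover have "of_nat (q ^ n) = (0 :: 'a)"
    using q0 assms(3) by simp
  moreover have "of_nat \<sigma> + of_nat (\<Sum>i<n. q ^ i) = (of_nat (q ^ n) + of_nat (2 * h) :: 'a)"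
    using \<sigma>(1) by (metis of_nat_add)
  ultimately have "of_nat (Suc \<sigma>) = (of_nat (2 * h) :: 'a)"
    by (simp add: add.commute)
  also have "\<dots> \<noteq> 0"
    using assms(7) of_nat_eq_0_iff_char_dvd by blast
  finally have "of_nat (card {(i, j) \<in> {..<q ^ n} \<times> {..<q ^ n}. i + j = \<sigma>}) \<noteq> (0 :: 'a)"
    using of_nat_card_pairs_with_sum_neq_0 \<open>of_nat (q ^ n) = 0\<close> \<sigma>(2) by blast
  with assms(5) show ?thesis
    using sum_power_binomial_eq_card[OF assms(1-4) \<open>r > 0\<close> \<sigma>(3), of a] by simp
qed

lemma not_bij_binomial:
  fixes a :: "'a :: {field, finite}" and q k n r h :: nat
  assumes "q = CHAR('a) ^ k" "k > 0" "n > 0" "CARD('a) = q ^ Suc n" "a \<noteq> 0"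
    and "r mod (\<Sum>i<Suc n. q ^ i) = h * q + 1" "\<not> CHAR('a) dvd 2 * h"
  shows "\<not> bij (\<lambda>x::'a. x ^ r * (x ^ (q - 1) + a))"
proof
  assume bij: "bij (\<lambda>x::'a. x ^ r * (x ^ (q - 1) + a))"
  have "q > 1"
    using assms(1,2) prime_CHAR_finite_field prime_gt_1_nat one_less_power by blast
  have "1 < q ^ n"
    by (rule one_less_power[OF \<open>q > 1\<close> assms(3)])
  moreover have "2 * q ^ n \<le> q ^ Suc n"
    using \<open>q > 1\<close> by simp
  ultimately have "0 < 2 * (q ^ n - 1)" "2 * (q ^ n - 1) < CARD('a) - 1"
    using assms(4) by linarith+
  then have "(\<Sum>x\<in>UNIV. (x ^ r * (x ^ (q - 1) + a)) ^ (2 * (q ^ n - 1))) = 0"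
    by (rule bij_imp_sum_power_eq_0[OF bij])
  with sum_power_binomial_neq_0[OF assms] show False
    by contradiction
qed

theorem proposition4p3:
  fixes p k q e r :: nat and h :: int and a :: "'a :: {field, finite}"
  assumes "prime p" and "odd p" and "k \<ge> 1" and "q = p ^ k"
    and "card (UNIV :: 'a set) = q ^ e" and "e \<ge> 2" and "r > 0" and "a \<noteq> 0"
    and "int (r mod (\<Sum>i<e. q ^ i)) = h * int q + 1"
    and "\<not> int p dvd h"
  shows "\<not> bij (\<lambda>x::'a. x ^ r * (x ^ (q - 1) + a))"
proof -
  obtain n where e: "e = Suc n" "n > 0"
    using assms(6) by (cases e) auto
  have char: "CHAR('a) = p"
    using CHAR_finite_field[OF assms(1), of "k * e"] assms(4,5) by (simp add: power_mult)
  have "q > 1"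
    using one_less_power[of p k] prime_gt_1_nat[OF assms(1)] assms(3,4) by simp
  have "h \<ge> 0"
  proof (rule ccontr)
    assume "\<not> h \<ge> 0"
    then have "h * int q \<le> -1 * int q"
      by (intro mult_right_mono) auto
    then show False
      using assms(9) \<open>q > 1\<close> by linarith
  qed
  then obtain h' :: nat where h: "h = int h'"
    by (metis nonneg_int_cases)
  have "r mod (\<Sum>i<Suc n. q ^ i) = h' * q + 1"
    using assms(9) unfolding h e(1) by (simp flip: of_nat_mult of_nat_Suc)
  moreover have "\<not> p dvd 2"
    using primes_dvd_imp_eq[OF assms(1) two_is_prime_nat] assms(2) by auto
  moreover have "\<not> p dvd h'"
    using assms(10) h by simp
  ultimately show ?thesis
    using assms(1,3,4,5,8) e char
    by (intro not_bij_binomial[of q k n a r h']) (auto simp: prime_dvd_mult_iff)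
qed

end
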